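(* Let $N\ge2$. For an integer $M\ge1$ and $q\in[0,1]^M$ say that $q$ satisfies $(E_M)$ if $M+(d^2-1)\sum_{i=1}^Mq_i=d(d-1)+\frac{(\sum_{i=1}^M\sqrt{(d^2-1)q_i+1})^2}{M+d-1}$. Let $p\in[0,1]^{N-1}$ satisfy $(E_{N-1})$. Then $(p,0)\in[0,1]^N$ satisfies $(E_N)$ if and only if $p=e_i$ for some $1\le i\le N-1$, where $e_i$ is the $i$-th standard basis vector of $\mathbb R^{N-1}$.
   Context: $d\ge2$ is an integer (the Hilbert space dimension). *)

theory Defs
  imports "HOL-Analysis.Analysis"
begin

text \<open>Vectors q in [0,1]^M are represented as functions nat => real, with
components q 0, ..., q (M-1) (0-based indexing). Condition (E_M) for dimension d.\<close>

definition in_unit_cube :: "nat \<Rightarrow> (nat \<Rightarrow> real) \<Rightarrow> bool" where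
  "in_unit_cube M q \<longleftrightarrow> (\<forall>i<M. 0 \<le> q i \<and> q i \<le> 1)"

definition satisfies_E :: "nat \<Rightarrow> nat \<Rightarrow> (nat \<Rightarrow> real) \<Rightarrow> bool" where
  "satisfies_E d M q \<longleftrightarrow>
     real M + (real d ^ 2 - 1) * (\<Sum>i<M. q i)
       = real d * (real d - 1)
         + (\<Sum>i<M. sqrt ((real d ^ 2 - 1) * q i + 1)) ^ 2 / (real M + real d - 1)"

end

theory Submission
  imports Defs
begin

text \<open>Writing \<open>S = \<Sum>i. sqrt ((d\<^sup>2 - 1) p\<^sub>i + 1)\<close> and \<open>K = N + d - 2\<close>, subtracting \<open>(E\<^sub>N\<^sub>-\<^sub>1)\<close>
  from \<open>(E\<^sub>N)\<close> for \<open>(p, 0)\<close> leaves \<open>S\<^sup>2 / K + 1 = (S + 1)\<^sup>2 / (K + 1)\<close>, i.e. \<open>(S - K)\<^sup>2 = 0\<close>.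
  Given \<open>S = K\<close>, \<open>(E\<^sub>N\<^sub>-\<^sub>1)\<close> forces \<open>\<Sum>i. p\<^sub>i = 1\<close>. By concavity of the square root,
  \<open>sqrt ((d\<^sup>2 - 1) q + 1) \<ge> 1 + (d - 1) q\<close> on \<open>[0, 1]\<close> with equality only at the endpoints,
  so \<open>S \<ge> N - 1 + (d - 1) \<Sum>i. p\<^sub>i = K\<close>, and equality forces \<open>p\<close> to be a 0-1 vector of
  sum 1, i.e. a standard basis vector.\<close>

lemma sqrt_chord_square:
  fixes a q :: real
  shows "(1 + (a - 1) * q)\<^sup>2 - ((a\<^sup>2 - 1) * q + 1) = (a - 1)\<^sup>2 * q * (q - 1)"
  by (simp add: algebra_simps power2_eq_square)

lemma sqrt_chord_le:
  fixes a q :: real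
  assumes "0 \<le> a" "0 \<le> q" "q \<le> 1"
  shows "1 + (a - 1) * q \<le> sqrt ((a\<^sup>2 - 1) * q + 1)"
proof -
  have "(a - 1)\<^sup>2 * q * (q - 1) \<le> 0"
    using assms by (simp add: mult_nonneg_nonpos)
  then have "(1 + (a - 1) * q)\<^sup>2 \<le> (a\<^sup>2 - 1) * q + 1"
    using sqrt_chord_square[of a q] by linarith
  then show ?thesis
    using real_le_rsqrt by blast
qed

lemma sqrt_chord_eq_iff:
  fixes a q :: real
  assumes "0 \<le> a" "a \<noteq> 1" "0 \<le> q" "q \<le> 1"
  shows "sqrt ((a\<^sup>2 - 1) * q + 1) = 1 + (a - 1) * q \<longleftrightarrow> q = 0 \<or> q = 1"
proof -
  have "1 + (a - 1) * q = (1 - q) + a * q"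
    by (simp add: algebra_simps)
  then have "0 \<le> 1 + (a - 1) * q"
    using assms mult_nonneg_nonneg[of a q] by linarith
  then have "sqrt ((a\<^sup>2 - 1) * q + 1) = 1 + (a - 1) * q \<longleftrightarrow>
             sqrt ((a\<^sup>2 - 1) * q + 1) = sqrt ((1 + (a - 1) * q)\<^sup>2)"
    by simp
  also have "\<dots> \<longleftrightarrow> (a\<^sup>2 - 1) * q + 1 = (1 + (a - 1) * q)\<^sup>2"
    by (rule real_sqrt_eq_iff)
  also have "\<dots> \<longleftrightarrow> (a - 1)\<^sup>2 * q * (q - 1) = 0"
    using sqrt_chord_square[of a q] by linarith
  also have "\<dots> \<longleftrightarrow> q = 0 \<or> q = 1"
    using assms by simp
  finally show ?thesis .
qed

lemma sum_sqrt_chord_eq_iff: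
  fixes a :: real and q :: "nat \<Rightarrow> real"
  assumes "0 \<le> a" "a \<noteq> 1" "in_unit_cube M q"
  shows "(\<Sum>i<M. sqrt ((a\<^sup>2 - 1) * q i + 1)) = real M + (a - 1) * (\<Sum>i<M. q i)
         \<longleftrightarrow> (\<forall>i<M. q i = 0 \<or> q i = 1)"
proof -
  have q: "0 \<le> q i" "q i \<le> 1" if "i < M" for i
    using assms(3) that by (auto simp: in_unit_cube_def)
  have "real M + (a - 1) * (\<Sum>i<M. q i) = (\<Sum>i<M. 1 + (a - 1) * q i)"
    by (simp add: sum.distrib sum_distrib_left)
  then have "(\<Sum>i<M. sqrt ((a\<^sup>2 - 1) * q i + 1)) = real M + (a - 1) * (\<Sum>i<M. q i)
             \<longleftrightarrow> (\<Sum>i<M. sqrt ((a\<^sup>2 - 1) * q i + 1) - (1 + (a - 1) * q i)) = 0"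
    by (simp add: sum_subtractf)
  also have "\<dots> \<longleftrightarrow> (\<forall>i<M. sqrt ((a\<^sup>2 - 1) * q i + 1) = 1 + (a - 1) * q i)"
    using sqrt_chord_le[OF assms(1) q] by (subst sum_nonneg_eq_0_iff) auto
  also have "\<dots> \<longleftrightarrow> (\<forall>i<M. q i = 0 \<or> q i = 1)"
    using sqrt_chord_eq_iff[OF assms(1,2) q] by auto
  finally show ?thesis .
qed

lemma binary_sum_eq_one_iff_unit_vector:
  fixes q :: "nat \<Rightarrow> 'a::linordered_semidom"
  shows "(\<forall>i<M. q i = 0 \<or> q i = 1) \<and> (\<Sum>i<M. q i) = 1
         \<longleftrightarrow> (\<exists>i<M. \<forall>j<M. q j = (if j = i then 1 else 0))"
proof
  assume binary: "(\<forall>i<M. q i = 0 \<or> q i = 1) \<and> (\<Sum>i<M. q i) = 1"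
  then obtain i where i: "i < M" "q i = 1"
    by (metis (no_types, lifting) lessThan_iff sum.neutral zero_neq_one)
  have "q j = 0" if j: "j < M" "j \<noteq> i" for j
  proof (rule ccontr)
    assume "q j \<noteq> 0"
    then have "1 + 1 = (\<Sum>k\<in>{i, j}. q k)"
      using binary i j by auto
    also have "\<dots> \<le> (\<Sum>k<M. q k)"
      using binary i j by (intro sum_mono2) auto
    also have "\<dots> = 1"
      using binary by simp
    finally show False
      using less_add_one[of "1::'a"] by simp
  qed
  then show "\<exists>i<M. \<forall>j<M. q j = (if j = i then 1 else 0)"
    using i by auto
next
  assume "\<exists>i<M. \<forall>j<M. q j = (if j = i then 1 else 0)"
  then obtain i where "i < M" "\<And>j. j < M \<Longrightarrow> q j = (if j = i then 1 else 0)"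
    by blast
  then show "(\<forall>i<M. q i = 0 \<or> q i = 1) \<and> (\<Sum>i<M. q i) = 1"
    by simp
qed

lemma square_div_succ_eq_iff:
  fixes S K :: real
  assumes "0 < K"
  shows "S\<^sup>2 / K + 1 = (S + 1)\<^sup>2 / (K + 1) \<longleftrightarrow> S = K"
proof -
  have "S\<^sup>2 / K + 1 = (S + 1)\<^sup>2 / (K + 1) \<longleftrightarrow> (S\<^sup>2 + K) * (K + 1) = K * (S + 1)\<^sup>2"
    using assms by (simp add: field_simps)
  also have "\<dots> \<longleftrightarrow> (S - K)\<^sup>2 = 0"
    by (simp add: algebra_simps power2_eq_square)
  finally show ?thesis
    by simp
qed

lemma satisfies_E_extend_zero_iff:
  assumes "M + d \<ge> 2" "satisfies_E d M q"
  shows "satisfies_E d (Suc M) (q(M := 0))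
         \<longleftrightarrow> (\<Sum>i<M. sqrt ((real d ^ 2 - 1) * q i + 1)) = real M + real d - 1"
proof -
  define S where "S = (\<Sum>i<M. sqrt ((real d ^ 2 - 1) * q i + 1))"
  have K: "0 < real M + real d - 1"
    using assms(1) by linarith
  have "(\<Sum>i<Suc M. (q(M := 0)) i) = (\<Sum>i<M. q i)"
       "(\<Sum>i<Suc M. sqrt ((real d ^ 2 - 1) * (q(M := 0)) i + 1)) = S + 1"
    by (auto simp: S_def intro!: sum.cong)
  then have "satisfies_E d (Suc M) (q(M := 0))
             \<longleftrightarrow> S\<^sup>2 / (real M + real d - 1) + 1 = (S + 1)\<^sup>2 / ((real M + real d - 1) + 1)"
    using assms(2) by (simp add: satisfies_E_def S_def add_ac)
  then show ?thesis
    using square_div_succ_eq_iff[OF K] by (simp add: S_def)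
qed

lemma satisfies_E_sum_eq_one:
  assumes "d \<ge> 2" "satisfies_E d M q"
    and "(\<Sum>i<M. sqrt ((real d ^ 2 - 1) * q i + 1)) = real M + real d - 1"
  shows "(\<Sum>i<M. q i) = 1"
proof -
  have K: "0 < real M + real d - 1"
    using assms(1) by linarith
  have "real M + (real d ^ 2 - 1) * (\<Sum>i<M. q i) = real d * (real d - 1) + (real M + real d - 1)"
    using assms(2,3) K by (simp add: satisfies_E_def power2_eq_square)
  also have "\<dots> = real M + (real d ^ 2 - 1)"
    by (simp add: algebra_simps power2_eq_square)
  finally have "(real d ^ 2 - 1) * (\<Sum>i<M. q i) = (real d ^ 2 - 1) * 1"
    by simp
  moreover have "real d ^ 2 - 1 \<noteq> 0"
    using power_mono[of 2 "real d" 2] assms(1) by simp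
  ultimately show ?thesis
    by simp
qed

theorem mainTheorem17:
  fixes d N :: nat and p :: "nat \<Rightarrow> real"
  assumes "d \<ge> 2" and "N \<ge> 2"
    and "in_unit_cube (N - 1) p"
    and "satisfies_E d (N - 1) p"
  shows "satisfies_E d N (p(N - 1 := 0)) \<longleftrightarrow>
         (\<exists>i<N - 1. \<forall>j<N - 1. p j = (if j = i then 1 else 0))"
proof -
  obtain M where N: "N = Suc M"
    using assms(2) by (cases N) auto
  define S where "S = (\<Sum>i<M. sqrt ((real d ^ 2 - 1) * p i + 1))"
  have E: "satisfies_E d M p" and cube: "in_unit_cube M p"
    using assms(3,4) N by auto
  have chord: "S = real M + (real d - 1) * (\<Sum>i<M. p i) \<longleftrightarrow> (\<forall>i<M. p i = 0 \<or> p i = 1)"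
    unfolding S_def using sum_sqrt_chord_eq_iff[OF _ _ cube, of "real d"] assms(1) by simp
  have "satisfies_E d N (p(N - 1 := 0)) \<longleftrightarrow> S = real M + real d - 1"
    using satisfies_E_extend_zero_iff[OF _ E] assms(1) N by (simp add: S_def)
  also have "\<dots> \<longleftrightarrow> (\<forall>i<M. p i = 0 \<or> p i = 1) \<and> (\<Sum>i<M. p i) = 1"
    using satisfies_E_sum_eq_one[OF assms(1) E] chord by (auto simp: S_def)
  also have "\<dots> \<longleftrightarrow> (\<exists>i<M. \<forall>j<M. p j = (if j = i then 1 else 0))"
    by (rule binary_sum_eq_one_iff_unit_vector)
  finally show ?thesis
    unfolding N by simp
qed

end
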